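(* Let $A$ be a cyclic Leibniz algebra generated by $a$, with notation as in the context. The maximal subalgebras of $A$ are precisely the null spaces $\{b\in A: r_j(L_a)(b)=0\}$, where $r_j(x)=p(x)/p_j(x)$, for $j=1,\dots,s$.
   Context: A (left) Leibniz algebra is an algebra satisfying $x(yz)=(xy)z+y(xz)$ for all $x,y,z$; all algebras are finite-dimensional over a field $F$. $A$ is a cyclic Leibniz algebra generated by $a$: $A$ is generated as an algebra by the single element $a$, and with $a^1=a$, $a^{k+1}=aa^k$, the elements $a,a^2,\dots,a^n$ form a basis of $A$. Write $aa^n=\alpha_2a^2+\cdots+\alpha_na^n$. $L_a:A\to A$ is $b\mapsto ab$, with characteristic (and minimal) polynomial $p(x)=x^n-\alpha_nx^{n-1}-\cdots-\alpha_2x=p_1(x)^{n_1}\cdots p_s(x)^{n_s}$, the $p_j$ distinct monic irreducibles over $F$, $p_1(x)=x$. *)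

theory Defs
  imports "HOL-Computational_Algebra.Computational_Algebra"
begin

text \<open>An algebra over the field 'k is modelled as an ambient type 'v (the whole
algebra A) with a scalar multiplication scale making it a vector space and a
product mul.\<close>

definition bilinear_mult :: "('k::field \<Rightarrow> 'v::ab_group_add \<Rightarrow> 'v) \<Rightarrow> ('v \<Rightarrow> 'v \<Rightarrow> 'v) \<Rightarrow> bool" where
  "bilinear_mult scale mul \<longleftrightarrow>
     (\<forall>x y z. mul (x + y) z = mul x z + mul y z) \<and>
     (\<forall>x y z. mul x (y + z) = mul x y + mul x z) \<and>
     (\<forall>c x y. mul (scale c x) y = scale c (mul x y)) \<and>
     (\<forall>c x y. mul x (scale c y) = scale c (mul x y))"

definition leibniz_algebra :: "('k::field \<Rightarrow> 'v::ab_group_add \<Rightarrow> 'v) \<Rightarrow> ('v \<Rightarrow> 'v \<Rightarrow> 'v) \<Rightarrow> bool" where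
  "leibniz_algebra scale mul \<longleftrightarrow>
     vector_space scale \<and> bilinear_mult scale mul \<and>
     (\<forall>x y z. mul x (mul y z) = mul (mul x y) z + mul y (mul x z))"

text \<open>Left-normed powers: a^1 = a, a^(k+1) = a a^k.\<close>
definition lpow :: "('v \<Rightarrow> 'v \<Rightarrow> 'v) \<Rightarrow> 'v \<Rightarrow> nat \<Rightarrow> 'v" where
  "lpow mul a k = ((mul a) ^^ (k - 1)) a"

definition subalgebra :: "('k::field \<Rightarrow> 'v::ab_group_add \<Rightarrow> 'v) \<Rightarrow> ('v \<Rightarrow> 'v \<Rightarrow> 'v) \<Rightarrow> 'v set \<Rightarrow> bool" where
  "subalgebra scale mul S \<longleftrightarrow> module.subspace scale S \<and> (\<forall>x\<in>S. \<forall>y\<in>S. mul x y \<in> S)"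

definition maximal_subalgebra :: "('k::field \<Rightarrow> 'v::ab_group_add \<Rightarrow> 'v) \<Rightarrow> ('v \<Rightarrow> 'v \<Rightarrow> 'v) \<Rightarrow> 'v set \<Rightarrow> bool" where
  "maximal_subalgebra scale mul S \<longleftrightarrow>
     subalgebra scale mul S \<and> S \<noteq> UNIV \<and>
     (\<forall>T. subalgebra scale mul T \<and> S \<subseteq> T \<longrightarrow> T = S \<or> T = UNIV)"

definition poly_op :: "('k::field \<Rightarrow> 'v::ab_group_add \<Rightarrow> 'v) \<Rightarrow> 'k poly \<Rightarrow> ('v \<Rightarrow> 'v) \<Rightarrow> 'v \<Rightarrow> 'v" where
  "poly_op scale q f v = (\<Sum>i\<le>degree q. scale (coeff q i) ((f ^^ i) v))"

text \<open>p(x) = x^n - alpha_n x^(n-1) - ... - alpha_1 (alpha_1 turns out to be 0).\<close>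
definition cyc_poly :: "nat \<Rightarrow> (nat \<Rightarrow> 'k::field) \<Rightarrow> 'k poly" where
  "cyc_poly n \<alpha> = monom 1 n - (\<Sum>k=1..n. monom (\<alpha> k) (k - 1))"

end

theory Submission
  imports Defs
begin

text \<open>
  Since the powers a^k = L_a^(k-1) a form a basis, a is a cyclic vector for L_a,
  every element is g(L_a) a for a polynomial g, and g(L_a) a = 0 iff p divides g.
  Hence the L_a-invariant subspaces are exactly the null spaces of (p/d)(L_a) for
  divisors d of p, ordered by reverse divisibility of d. The Leibniz identity shows
  that every a^k with k \<ge> 2 annihilates A from the left, so g(L_a)a \<cdot> y = g(0) a y.
  Consequently invariant subspaces are subalgebras, the constant term of p vanishes,
  and a subalgebra that is not invariant lies in the null space of (p/x)(L_a).
  Maximal subalgebras are therefore maximal proper invariant subspaces, i.e. the null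
  spaces of (p/q)(L_a) for the monic irreducible factors q of p.
\<close>

section \<open>Preliminaries on polynomials and linear independence\<close>

lemma monic_irreducible_factor:
  fixes d :: "'k::field poly"
  assumes "d \<noteq> 0" "\<not> is_unit d"
  obtains q where "irreducible q" "lead_coeff q = 1" "q dvd d"
proof -
  have "\<exists>q. irreducible q \<and> q dvd d"
    using assms
  proof (induction "degree d" arbitrary: d rule: less_induct)
    case (less d)
    show ?case
    proof (cases "irreducible d")
      case True
      then show ?thesis by auto
    next
      case False
      then obtain b c where bc: "d = b * c" "\<not> is_unit b" "\<not> is_unit c"
        using less.prems by (auto simp: irreducible_def)
      then have "b \<noteq> 0" "c \<noteq> 0" using less.prems(1) by auto
      with bc have "degree b < degree d"
        by (simp add: degree_mult_eq is_unit_iff_degree)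
      then obtain q where "irreducible q" "q dvd b"
        using less.hyps \<open>b \<noteq> 0\<close> bc(2) by blast
      then show ?thesis using bc(1) by (metis dvd_mult2)
    qed
  qed
  then obtain q where q: "irreducible q" "q dvd d" by blast
  define q' where "q' = smult (inverse (lead_coeff q)) q"
  have "q \<noteq> 0" using q(1) by auto
  then have "irreducible q'"
    using irreducible_mult_unit_left[of "[:inverse (lead_coeff q):]" q] q(1)
    by (simp add: q'_def is_unit_poly_iff dvd_field_iff)
  moreover have "lead_coeff q' = 1" "q' dvd d"
    using \<open>q \<noteq> 0\<close> q(2) by (auto simp: q'_def lead_coeff_smult smult_dvd_iff)
  ultimately show ?thesis by (rule that)
qed

lemma monic_irreducible_dvd_eq:
  fixes p q :: "'k::field poly"
  assumes "irreducible q" "lead_coeff p = 1" "lead_coeff q = 1" "p dvd q" "\<not> is_unit p"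
  shows "p = q"
proof -
  obtain e where e: "q = p * e" using assms(4) by (rule dvdE)
  then have "is_unit e" using irreducibleD[OF assms(1) e] assms(5) by blast
  then obtain c where "e = [:c:]" using is_unit_poly_iff by blast
  moreover have "lead_coeff q = lead_coeff p * lead_coeff e" by (simp add: e lead_coeff_mult)
  ultimately have "e = 1" using assms(2,3) by (simp add: one_pCons)
  then show ?thesis using e by simp
qed

lemma (in vector_space) independent_family_coeffs_zero:
  assumes "finite I" "inj_on b I" "independent (b ` I)"
    and "(\<Sum>i\<in>I. scale (c i) (b i)) = 0" "i \<in> I"
  shows "c i = 0"
proof -
  define u where "u w = c (the_inv_into I b w)" for w
  have "(\<Sum>w\<in>b ` I. scale (u w) w) = (\<Sum>i\<in>I. scale (u (b i)) (b i))"
    by (rule sum.reindex[OF assms(2), unfolded comp_def])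
  also have "\<dots> = 0"
    using assms(4) by (simp add: u_def the_inv_into_f_f[OF assms(2)])
  finally have "u (b i) = 0"
    using assms(1,3,5) dependent_finite[of "b ` I"] by auto
  then show ?thesis by (simp add: u_def the_inv_into_f_f[OF assms(2,5)])
qed

section \<open>Polynomials in a linear operator\<close>

locale linear_operator = vector_space scale
  for scale :: "'k::field \<Rightarrow> 'v::ab_group_add \<Rightarrow> 'v" +
  fixes f :: "'v \<Rightarrow> 'v"
  assumes f_add: "f (x + y) = f x + f y"
    and f_scale: "f (scale c x) = scale c (f x)"
begin

definition peval :: "'k poly \<Rightarrow> 'v \<Rightarrow> 'v" where
  "peval g = poly_op scale g f"

definition null_space :: "'k poly \<Rightarrow> 'v set" where
  "null_space g = {v. peval g v = 0}"

definition invariant :: "'v set \<Rightarrow> bool" where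
  "invariant W \<longleftrightarrow> subspace W \<and> (\<forall>x\<in>W. f x \<in> W)"

lemma peval_degree_le:
  assumes "degree g \<le> N"
  shows "peval g v = (\<Sum>i\<le>N. scale (coeff g i) ((f ^^ i) v))"
  unfolding peval_def poly_op_def
  by (rule sum.mono_neutral_left) (auto simp: assms coeff_eq_0 not_le)

lemma peval_pCons: "peval (pCons c g) v = scale c v + peval g (f v)"
proof -
  have "peval (pCons c g) v = (\<Sum>i\<le>Suc (degree g). scale (coeff (pCons c g) i) ((f ^^ i) v))"
    by (rule peval_degree_le) (simp add: degree_pCons_le)
  also have "\<dots> = scale c v + (\<Sum>i\<le>degree g. scale (coeff g i) ((f ^^ i) (f v)))"
    unfolding sum.atMost_Suc_shift by (simp add: funpow_Suc_right del: funpow.simps)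
  finally show ?thesis by (simp add: peval_def poly_op_def)
qed

lemma peval_0 [simp]: "peval 0 v = 0"
  by (simp add: peval_def poly_op_def)

lemma peval_const [simp]: "peval [:c:] v = scale c v"
  by (simp add: peval_pCons)

lemma peval_1 [simp]: "peval 1 v = v"
  using peval_const[of 1 v] by (simp add: one_pCons)

lemma peval_add: "peval (g + h) v = peval g v + peval h v"
  using peval_degree_le[of g "max (degree g) (degree h)"]
    peval_degree_le[of h "max (degree g) (degree h)"]
    peval_degree_le[of "g + h" "max (degree g) (degree h)"]
  by (simp add: degree_add_le scale_left_distrib sum.distrib)

lemma peval_smult: "peval (smult c g) v = scale c (peval g v)"
  by (simp add: peval_degree_le[of _ "degree g"] scale_sum_right)

lemma peval_diff: "peval (g - h) v = peval g v - peval h v"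
  using peval_add[of g "- h" v] peval_smult[of "- 1" h v] by (simp add: scale_minus_left)

lemma peval_sum: "peval (\<Sum>i\<in>I. g i) v = (\<Sum>i\<in>I. peval (g i) v)"
  by (induction I rule: infinite_finite_induct) (simp_all add: peval_add)

lemma peval_monom: "peval (monom c k) v = scale c ((f ^^ k) v)"
  by (induction k arbitrary: v)
     (simp_all add: peval_pCons monom_Suc monom_0 funpow_Suc_right del: funpow.simps)

lemma f_0 [simp]: "f 0 = 0"
  using f_scale[of 0 0] by simp

lemma peval_vec_add: "peval g (v + w) = peval g v + peval g w"
  by (induction g arbitrary: v w) (simp_all add: peval_pCons f_add scale_right_distrib algebra_simps)

lemma peval_vec_scale: "peval g (scale c v) = scale c (peval g v)"
  by (induction g arbitrary: v) (simp_all add: peval_pCons f_scale scale_right_distrib scale_left_commute)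

lemma peval_vec_0 [simp]: "peval g 0 = 0"
  using peval_vec_scale[of g 0 0] by simp

lemma f_peval: "f (peval g v) = peval g (f v)"
  by (induction g arbitrary: v) (simp_all add: peval_pCons f_add f_scale)

lemma peval_mult: "peval (g * h) v = peval g (peval h v)"
  by (induction g arbitrary: v) (simp_all add: peval_pCons peval_add peval_smult f_peval)

lemma invariant_peval: "invariant W \<Longrightarrow> v \<in> W \<Longrightarrow> peval g v \<in> W"
  by (induction g arbitrary: v)
     (auto simp: peval_pCons invariant_def intro: subspace_add subspace_scale subspace_0)

lemma invariant_null_space: "invariant (null_space g)"
  unfolding invariant_def subspace_def null_space_def
  by (auto simp: peval_vec_add peval_vec_scale f_peval[symmetric])

end

section \<open>Cyclic vectors\<close>

locale cyclic_operator = linear_operator scale f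
  for scale :: "'k::field \<Rightarrow> 'v::ab_group_add \<Rightarrow> 'v" and f :: "'v \<Rightarrow> 'v" +
  fixes a :: 'v and P :: "'k poly"
  assumes P_nonzero: "P \<noteq> 0"
    and P_annihilates: "peval P a = 0"
    and orbit_inj: "inj_on (\<lambda>i. (f ^^ i) a) {..<degree P}"
    and orbit_independent: "independent ((\<lambda>i. (f ^^ i) a) ` {..<degree P})"
    and orbit_spans: "span ((\<lambda>i. (f ^^ i) a) ` {..<degree P}) = UNIV"
begin

lemma peval_surj: obtains g where "peval g a = v"
proof -
  have "v \<in> span ((\<lambda>i. (f ^^ i) a) ` {..<degree P})" using orbit_spans by simp
  then have "\<exists>g. peval g a = v"
  proof (induction rule: span_induct_alt)
    case base
    show ?case by (intro exI[of _ 0]) simp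
  next
    case (step c x y)
    then obtain i g where "x = (f ^^ i) a" "peval g a = y" by auto
    then show ?case by (intro exI[of _ "monom c i + g"]) (simp add: peval_add peval_monom)
  qed
  then show ?thesis using that by blast
qed

lemma peval_small_degree:
  assumes "degree r < degree P" "peval r a = 0"
  shows "r = 0"
proof -
  have "(\<Sum>i<degree P. scale (coeff r i) ((f ^^ i) a)) = 0"
    using assms peval_degree_le[of r "degree P - 1" a] by (simp add: lessThan_Suc_atMost[symmetric])
  then have "coeff r i = 0" if "i < degree P" for i
    using independent_family_coeffs_zero[OF _ orbit_inj orbit_independent] that by blast
  then show ?thesis using assms(1) by (metis coeff_eq_0 leading_coeff_0_iff not_le order.strict_trans1)
qed

lemma peval_eq_0_iff: "peval g a = 0 \<longleftrightarrow> P dvd g"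
proof
  assume g: "peval g a = 0"
  have "peval (g mod P) a = peval g a - peval (g div P) (peval P a)"
    by (simp add: minus_div_mult_eq_mod[symmetric] peval_diff peval_mult)
  then have "peval (g mod P) a = 0" using g P_annihilates by simp
  moreover have "degree (g mod P) < degree P \<or> g mod P = 0"
    using degree_mod_less[OF P_nonzero] by blast
  ultimately have "g mod P = 0" using peval_small_degree by blast
  then show "P dvd g" by (simp add: mod_eq_0_iff_dvd)
next
  assume "P dvd g"
  then show "peval g a = 0" by (auto simp: mult.commute[of P] peval_mult P_annihilates)
qed

lemma peval_in_null_space_iff:
  assumes "q dvd P"
  shows "peval g a \<in> null_space (P div q) \<longleftrightarrow> q dvd g"
proof -
  have P: "P = q * (P div q)" using assms by simp
  then have "P div q \<noteq> 0" using P_nonzero by (metis mult_zero_right)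
  moreover have "peval g a \<in> null_space (P div q) \<longleftrightarrow> q * (P div q) dvd g * (P div q)"
    by (simp add: null_space_def peval_mult[symmetric] peval_eq_0_iff mult.commute P[symmetric])
  ultimately show ?thesis by simp
qed

lemma null_space_subset_iff:
  assumes "q dvd P" "d dvd P"
  shows "null_space (P div d) \<subseteq> null_space (P div q) \<longleftrightarrow> q dvd d"
proof
  assume "null_space (P div d) \<subseteq> null_space (P div q)"
  moreover have "peval d a \<in> null_space (P div d)" using peval_in_null_space_iff[OF assms(2)] by simp
  ultimately show "q dvd d" using peval_in_null_space_iff[OF assms(1)] by blast
next
  assume "q dvd d"
  show "null_space (P div d) \<subseteq> null_space (P div q)"
  proof
    fix v assume "v \<in> null_space (P div d)"
    moreover obtain g where "peval g a = v" by (rule peval_surj)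
    ultimately show "v \<in> null_space (P div q)"
      using peval_in_null_space_iff assms \<open>q dvd d\<close> by (metis dvd_trans)
  qed
qed

lemma null_space_eq_UNIV_iff:
  assumes "q dvd P"
  shows "null_space (P div q) = UNIV \<longleftrightarrow> is_unit q"
proof
  assume "null_space (P div q) = UNIV"
  then show "is_unit q" using peval_in_null_space_iff[OF assms, of 1] by simp
next
  assume "is_unit q"
  have "v \<in> null_space (P div q)" for v
  proof -
    obtain g where "peval g a = v" by (rule peval_surj)
    then show ?thesis using peval_in_null_space_iff[OF assms] \<open>is_unit q\<close> by (metis unit_imp_dvd)
  qed
  then show "null_space (P div q) = UNIV" by blast
qed

text \<open>Every f-invariant subspace is the null space of (P/d)(f) for a divisor d of P:
  d generates the ideal of polynomials g with g(f) a in W.\<close>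
lemma invariant_eq_null_space:
  assumes "invariant W"
  obtains d where "d dvd P" "W = null_space (P div d)"
proof -
  let ?I = "{g. peval g a \<in> W}"
  have "P \<in> ?I" using assms P_annihilates by (simp add: invariant_def subspace_0)
  then obtain d where d: "d \<in> ?I" "d \<noteq> 0" and least: "\<And>e. e \<in> ?I \<Longrightarrow> e \<noteq> 0 \<Longrightarrow> degree d \<le> degree e"
    using ex_has_least_nat[of "\<lambda>g. g \<in> ?I \<and> g \<noteq> 0" P degree] P_nonzero by blast
  have gen: "g \<in> ?I \<longleftrightarrow> d dvd g" for g
  proof
    assume g: "g \<in> ?I"
    have "peval (g mod d) a = peval g a - peval (g div d) (peval d a)"
      by (simp add: minus_div_mult_eq_mod[symmetric] peval_diff peval_mult)
    also have "\<dots> \<in> W"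
      using g d(1) assms invariant_peval by (auto simp: invariant_def intro: subspace_diff)
    finally have "g mod d \<in> ?I" by simp
    then have "g mod d = 0" using least degree_mod_less[OF d(2)] by (meson leD)
    then show "d dvd g" by (simp add: mod_eq_0_iff_dvd)
  next
    assume "d dvd g"
    then obtain e where "g = d * e" by (rule dvdE)
    then show "g \<in> ?I"
      using invariant_peval[OF assms] d(1) by (simp add: mult.commute[of d] peval_mult)
  qed
  have "d dvd P" using gen \<open>P \<in> ?I\<close> by blast
  moreover have "W = null_space (P div d)"
  proof (intro set_eqI)
    fix v
    obtain g where "peval g a = v" by (rule peval_surj)
    then show "v \<in> W \<longleftrightarrow> v \<in> null_space (P div d)"
      using gen peval_in_null_space_iff[OF \<open>d dvd P\<close>] by auto
  qed
  ultimately show ?thesis by (rule that)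
qed

end

section \<open>Cyclic Leibniz algebras\<close>

lemma degree_cyc_poly:
  assumes "n \<ge> 1"
  shows "degree (cyc_poly n \<alpha>) = n"
proof -
  have "degree (monom (\<alpha> k) (k - 1)) < n" if "k \<in> {1..n}" for k
    using that degree_monom_le[of "\<alpha> k" "k - 1"] by auto
  then have "degree (\<Sum>k=1..n. monom (\<alpha> k) (k - 1)) < degree (monom (1::'a) n)"
    using assms by (simp add: degree_monom_eq degree_sum_less del: atLeastAtMost_iff)
  then show ?thesis
    using degree_add_eq_left[of "- (\<Sum>k=1..n. monom (\<alpha> k) (k - 1))" "monom 1 n"]
    by (simp add: cyc_poly_def degree_monom_eq)
qed

locale cyclic_leibniz = vector_space scale
  for scale :: "'k::field \<Rightarrow> 'v::ab_group_add \<Rightarrow> 'v" +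
  fixes mul :: "'v \<Rightarrow> 'v \<Rightarrow> 'v" and a :: 'v and n :: nat and \<alpha> :: "nat \<Rightarrow> 'k"
  assumes leibniz_alg: "leibniz_algebra scale mul"
    and n_pos: "n \<ge> 1"
    and lpow_inj: "inj_on (lpow mul a) {1..n}"
    and lpow_independent: "independent (lpow mul a ` {1..n})"
    and lpow_spans: "span (lpow mul a ` {1..n}) = UNIV"
    and top_power: "mul a (lpow mul a n) = (\<Sum>k=1..n. scale (\<alpha> k) (lpow mul a k))"
begin

lemma mul_add_left: "mul (x + y) z = mul x z + mul y z"
  and mul_add_right: "mul x (y + z) = mul x y + mul x z"
  and mul_scale_left: "mul (scale c x) y = scale c (mul x y)"
  and mul_scale_right: "mul x (scale c y) = scale c (mul x y)"
  using leibniz_alg unfolding leibniz_algebra_def bilinear_mult_def by blast+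

lemma leibniz_identity: "mul x (mul y z) = mul (mul x y) z + mul y (mul x z)"
  using leibniz_alg unfolding leibniz_algebra_def by blast

lemma lpow_Suc: "lpow mul a (Suc i) = (mul a ^^ i) a"
  by (simp add: lpow_def)

lemma lpow_image: "lpow mul a ` {1..n} = (\<lambda>i. (mul a ^^ i) a) ` {..<n}"
  by (simp only: image_Suc_lessThan[symmetric] image_image lpow_Suc)

sublocale linear_operator scale "mul a"
  by unfold_locales (simp_all add: mul_add_right mul_scale_right)

abbreviation P :: "'k poly" where "P \<equiv> cyc_poly n \<alpha>"

lemma degree_P: "degree P = n"
  using degree_cyc_poly[OF n_pos] .

lemma P_annihilates_generator: "peval P a = 0"
proof -
  have "(mul a ^^ n) a = mul a (lpow mul a n)"
    using n_pos by (cases n) (simp_all add: lpow_def)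
  also have "\<dots> = (\<Sum>k=1..n. scale (\<alpha> k) ((mul a ^^ (k - 1)) a))"
    using top_power by (simp add: lpow_def)
  finally show ?thesis
    by (simp add: cyc_poly_def peval_diff peval_sum peval_monom)
qed

sublocale cyclic_operator scale "mul a" a P
proof unfold_locales
  show "P \<noteq> 0" using degree_P n_pos by auto
  show "peval P a = 0" by (rule P_annihilates_generator)
  show "inj_on (\<lambda>i. (mul a ^^ i) a) {..<degree P}"
    using lpow_inj comp_inj_on_iff[of Suc "{..<n}" "lpow mul a"]
    by (simp add: degree_P image_Suc_lessThan comp_def lpow_Suc)
  show "independent ((\<lambda>i. (mul a ^^ i) a) ` {..<degree P})"
    using lpow_independent unfolding degree_P lpow_image .
  show "span ((\<lambda>i. (mul a ^^ i) a) ` {..<degree P}) = UNIV"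
    using lpow_spans unfolding degree_P lpow_image .
qed

definition left_annihilator :: "'v set" where
  "left_annihilator = {w. \<forall>z. mul w z = 0}"

lemma mul_zero_left [simp]: "mul 0 z = 0"
  using mul_add_left[of 0 0 z] by simp

text \<open>The left annihilator is an L_a-invariant subspace: by the Leibniz identity
  (a w) z = a (w z) - w (a z).\<close>
lemma invariant_left_annihilator: "invariant left_annihilator"
proof -
  have "mul (mul a w) z = 0" if "\<forall>z. mul w z = 0" for w z
    using leibniz_identity[of a w z] that by simp
  then show ?thesis
    unfolding invariant_def subspace_def left_annihilator_def
    by (simp add: mul_add_left mul_scale_left)
qed

text \<open>a a = L_a a annihilates from the left, by the Leibniz identity for x = y = a.\<close>
lemma square_in_left_annihilator: "mul a a \<in> left_annihilator"
  unfolding left_annihilator_def using leibniz_identity[of a a] by simp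

lemma mul_peval: "mul (peval g a) y = scale (coeff g 0) (mul a y)"
proof (cases g rule: pCons_cases)
  case (pCons c h)
  have "peval h (mul a a) \<in> left_annihilator"
    by (rule invariant_peval[OF invariant_left_annihilator square_in_left_annihilator])
  then show ?thesis
    by (simp add: pCons peval_pCons mul_add_left mul_scale_left left_annihilator_def)
qed

abbreviation X :: "'k poly" where "X \<equiv> [:0, 1:]"

text \<open>a \<noteq> 0, since otherwise P would divide 1.\<close>
lemma generator_nonzero: "a \<noteq> 0"
proof
  assume "a = 0"
  then have "peval 1 a = 0" by (subst peval_1)
  then have "P dvd 1" using peval_eq_0_iff by blast
  then show False using degree_P n_pos by (simp add: is_unit_iff_degree[OF P_nonzero])
qed

text \<open>The constant coefficient of P vanishes (so alpha_1 = 0): apply mul_peval to P and a.\<close>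
lemma X_dvd_P: "X dvd P"
proof -
  obtain c h where P: "P = pCons c h" by (rule pCons_cases)
  have "scale c (mul a a) = 0"
    using mul_peval[of P a] P_annihilates by (simp add: P)
  moreover have "c = 0" if "mul a a = 0"
    using P_annihilates that generator_nonzero by (simp add: P peval_pCons)
  ultimately have "coeff P 0 = 0" by (auto simp: P)
  then show ?thesis by (simp add: dvd_iff_poly_eq_0 poly_0_coeff_0)
qed

lemma invariant_subalgebra:
  assumes "invariant W"
  shows "subalgebra scale mul W"
  unfolding subalgebra_def
proof (intro conjI ballI)
  show "subspace W" using assms by (simp add: invariant_def)
  fix x y assume "x \<in> W" "y \<in> W"
  obtain g where "peval g a = x" by (rule peval_surj)
  moreover have "mul a y \<in> W" "subspace W" using assms \<open>y \<in> W\<close> by (auto simp: invariant_def)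
  ultimately show "mul x y \<in> W" by (auto simp: mul_peval intro: subspace_scale)
qed

text \<open>A subalgebra that is not L_a-invariant lies in the null space of (P/x)(L_a):
  if y \<in> T but a y \<notin> T, then g(L_a) a \<in> T forces g(0) = 0.\<close>
lemma noninvariant_subalgebra:
  assumes "subalgebra scale mul T" "y \<in> T" "mul a y \<notin> T"
  shows "T \<subseteq> null_space (P div X)"
proof
  fix x assume "x \<in> T"
  obtain g where g: "peval g a = x" by (rule peval_surj)
  have T: "subspace T" using assms(1) by (simp add: subalgebra_def)
  have "mul x y \<in> T" using assms(1,2) \<open>x \<in> T\<close> by (simp add: subalgebra_def)
  then have "scale (coeff g 0) (mul a y) \<in> T" by (simp add: g[symmetric] mul_peval)
  then have "coeff g 0 = 0"
    using subspace_scale[OF T, of _ "inverse (coeff g 0)"] assms(3)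
    by (metis scale_one scale_scale field_class.field_inverse)
  then have "X dvd g" by (simp add: dvd_iff_poly_eq_0 poly_0_coeff_0)
  then show "x \<in> null_space (P div X)" using peval_in_null_space_iff[OF X_dvd_P] g by blast
qed

lemma X_irreducible: "irreducible X"
  by (rule irreducible_linear_field_poly) simp

lemma subalgebra_cases:
  assumes "subalgebra scale mul T"
  obtains "invariant T" | y where "y \<in> T" "mul a y \<notin> T"
  using assms by (auto simp: invariant_def subalgebra_def)

lemma null_space_maximal:
  assumes q: "irreducible q" "lead_coeff q = 1" "q dvd P"
  shows "maximal_subalgebra scale mul (null_space (P div q))"
  unfolding maximal_subalgebra_def
proof (intro conjI allI impI)
  let ?N = "null_space (P div q)"
  show "subalgebra scale mul ?N" by (rule invariant_subalgebra[OF invariant_null_space])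
  show "?N \<noteq> UNIV" using null_space_eq_UNIV_iff[OF q(3)] q(1) irreducible_not_unit by blast
  fix T assume T: "subalgebra scale mul T \<and> ?N \<subseteq> T"
  then consider "invariant T" | y where "y \<in> T" "mul a y \<notin> T"
    using subalgebra_cases by blast
  then show "T = ?N \<or> T = UNIV"
  proof cases
    case 1
    then obtain d where d: "d dvd P" "T = null_space (P div d)" by (rule invariant_eq_null_space)
    then have "d dvd q" using T null_space_subset_iff[OF d(1) q(3)] by simp
    then obtain e where "q = d * e" by (rule dvdE)
    from irreducibleD[OF q(1) this] show ?thesis
    proof
      assume "is_unit d"
      then show ?thesis using null_space_eq_UNIV_iff[OF d(1)] d(2) by simp
    next
      assume "is_unit e"
      then have "q dvd d" using \<open>q = d * e\<close> by (simp add: dvd_mult_unit_iff)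
      then have "T \<subseteq> ?N" using null_space_subset_iff[OF q(3) d(1)] d(2) by simp
      then show ?thesis using T by auto
    qed
  next
    case 2
    then have TX: "T \<subseteq> null_space (P div X)" using noninvariant_subalgebra T by blast
    then have "X dvd q" using T null_space_subset_iff[OF X_dvd_P q(3)] by blast
    then have "X = q"
      using irreducible_not_unit[OF X_irreducible]
      by (intro monic_irreducible_dvd_eq[OF q(1) _ q(2)]) simp_all
    then show ?thesis using TX T by auto
  qed
qed

text \<open>Conversely every maximal subalgebra is of this form: it is contained in some
  null space of the above kind (invariant case: via a monic irreducible factor of the
  divisor describing it; non-invariant case: q = x), and maximality forces equality.\<close>
lemma maximal_is_null_space:
  assumes "maximal_subalgebra scale mul S"
  obtains q where "irreducible q" "lead_coeff q = 1" "q dvd P" "S = null_space (P div q)"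
proof -
  have S: "subalgebra scale mul S" "S \<noteq> UNIV"
    and max: "\<And>T. subalgebra scale mul T \<Longrightarrow> S \<subseteq> T \<Longrightarrow> T = S \<or> T = UNIV"
    using assms unfolding maximal_subalgebra_def by blast+
  have below: "S = null_space (P div q)" if "irreducible q" "q dvd P" "S \<subseteq> null_space (P div q)" for q
    using max[OF invariant_subalgebra[OF invariant_null_space] that(3)]
      null_space_eq_UNIV_iff[OF that(2)] irreducible_not_unit[OF that(1)] by auto
  from S(1) consider "invariant S" | y where "y \<in> S" "mul a y \<notin> S"
    by (rule subalgebra_cases)
  then show ?thesis
  proof cases
    case 1
    then obtain d where d: "d dvd P" "S = null_space (P div d)" by (rule invariant_eq_null_space)
    have "\<not> is_unit d" using S(2) d null_space_eq_UNIV_iff by simp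
    moreover have "d \<noteq> 0" using d(1) P_nonzero by auto
    ultimately obtain q where q: "irreducible q" "lead_coeff q = 1" "q dvd d"
      using monic_irreducible_factor by blast
    have "q dvd P" using q(3) d(1) by (rule dvd_trans)
    moreover have "S \<subseteq> null_space (P div q)"
      using null_space_subset_iff[OF \<open>q dvd P\<close> d(1)] q(3) d(2) by simp
    ultimately show ?thesis using below q that by blast
  next
    case 2
    then have "S \<subseteq> null_space (P div X)" using noninvariant_subalgebra S(1) by blast
    then show ?thesis using below[OF X_irreducible X_dvd_P] X_irreducible X_dvd_P that by simp
  qed
qed

lemma maximal_subalgebras:
  "{S. maximal_subalgebra scale mul S} =
     (\<lambda>q. null_space (P div q)) ` {q. irreducible q \<and> lead_coeff q = 1 \<and> q dvd P}"
proof (intro set_eqI iffI)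
  fix S assume "S \<in> {S. maximal_subalgebra scale mul S}"
  then obtain q where "irreducible q" "lead_coeff q = 1" "q dvd P" "S = null_space (P div q)"
    using maximal_is_null_space by blast
  then show "S \<in> (\<lambda>q. null_space (P div q)) ` {q. irreducible q \<and> lead_coeff q = 1 \<and> q dvd P}"
    by blast
next
  fix S assume "S \<in> (\<lambda>q. null_space (P div q)) ` {q. irreducible q \<and> lead_coeff q = 1 \<and> q dvd P}"
  then show "S \<in> {S. maximal_subalgebra scale mul S}" using null_space_maximal by blast
qed

end

theorem mainTheorem9:
  fixes scale :: "'k::field \<Rightarrow> 'v::ab_group_add \<Rightarrow> 'v"
    and mul :: "'v \<Rightarrow> 'v \<Rightarrow> 'v"
    and a :: 'v and n :: nat and \<alpha> :: "nat \<Rightarrow> 'k"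
  assumes "leibniz_algebra scale mul"
    and "n \<ge> 1"
    and "inj_on (lpow mul a) {1..n}"
    and "\<not> module.dependent scale (lpow mul a ` {1..n})"
    and "module.span scale (lpow mul a ` {1..n}) = UNIV"
    and "mul a (lpow mul a n) = (\<Sum>k=1..n. scale (\<alpha> k) (lpow mul a k))"
  shows "{S. maximal_subalgebra scale mul S} =
           (\<lambda>q. {b. poly_op scale (cyc_poly n \<alpha> div q) (mul a) b = 0})
             ` {q. irreducible q \<and> lead_coeff q = 1 \<and> q dvd cyc_poly n \<alpha>}"
proof -
  have "vector_space scale" using assms(1) by (simp add: leibniz_algebra_def)
  then interpret cyclic_leibniz scale mul a n \<alpha>
    using assms by (intro cyclic_leibniz.intro cyclic_leibniz_axioms.intro)
  have "null_space = (\<lambda>g. {b. poly_op scale g (mul a) b = 0})"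
    by (simp add: null_space_def peval_def fun_eq_iff)
  then show ?thesis using maximal_subalgebras by simp
qed

end
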